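(* Let $n\ge4$. There is no total single-sorted alter ego $\underset{\sim}{\mathbf C}_n$ for $\mathbf C_n$ that yields a strong duality on $\mathcal G_n$.
   Context: $\mathbf C_n$ is the Heyting algebra on the chain $\{0<1<\dots<n-1\}$, with min, max, $\bot=0$, $\top=n-1$, $a\to b=\top$ if $a\le b$, $a\to b=b$ if $b<a$. $\mathcal G_n$ is the class of algebras isomorphic to subalgebras of direct powers of $\mathbf C_n$ (the variety generated by $\mathbf C_n$). A (single-sorted) alter ego of $\mathbf C_n$ is a structure $\underset{\sim}{\mathbf C}_n=(C_n;G,H,R,\mathscr T)$ where $\mathscr T$ is the discrete topology, $G$ is a set of finitary total operations, $H$ a set of finitary partial operations and $R$ a set of finitary relations on $C_n$, each algebraic (the graph, resp. the relation, is a subalgebra of a finite power of $\mathbf C_n$); it is total if $H=\emptyset$. With $\mathcal X=\mathbb{IS}_c\mathbb P^+(\underset{\sim}{\mathbf C}_n)$ the class of structures isomorphic to closed substructures of (possibly empty) powers, and hom-functors $D=\mathcal G_n(-,\mathbf C_n)$, $E=\mathcal X(-,\underset{\sim}{\mathbf C}_n)$, the alter ego yields a duality if each evaluation $e_{\mathbf A}\colon\mathbf A\to ED(\mathbf A)$ is an isomorphism, a full duality if moreover each evaluation $\varepsilon_{\mathbf X}\colon\mathbf X\to DE(\mathbf X)$ is an isomorphism, and a strong duality if it yields a full duality and $\underset{\sim}{\mathbf C}_n$ is injective in $\mathcal X$ (with respect to embeddings). *)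

theory Defs
  imports "HOL-Analysis.Analysis"
begin

section \<open>The Heyting chain C_n, carried by {0,...,n-1} :: nat set\<close>

definition himp :: "nat \<Rightarrow> nat \<Rightarrow> nat \<Rightarrow> nat" where
  "himp n a b = (if a \<le> b then n - 1 else b)"

section \<open>Algebras in G_n: subalgebras of direct powers C_n^S (S possibly empty)\<close>

text \<open>Points of C_n^S are the extensional functions in PiE S (\<lambda>_. {..<n});
  all operations are pointwise.\<close>

definition subalg :: "nat \<Rightarrow> 'a set \<Rightarrow> ('a \<Rightarrow> nat) set \<Rightarrow> bool" where
  "subalg n S A \<longleftrightarrow> A \<subseteq> PiE S (\<lambda>_. {..<n}) \<and>
     (\<lambda>s\<in>S. 0) \<in> A \<and> (\<lambda>s\<in>S. n - 1) \<in> A \<and>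
     (\<forall>x\<in>A. \<forall>y\<in>A. (\<lambda>s\<in>S. min (x s) (y s)) \<in> A \<and> (\<lambda>s\<in>S. max (x s) (y s)) \<in> A
                   \<and> (\<lambda>s\<in>S. himp n (x s) (y s)) \<in> A)"

definition alg_hom :: "nat \<Rightarrow> 'a set \<Rightarrow> ('a \<Rightarrow> nat) set \<Rightarrow> 'b set \<Rightarrow> ('b \<Rightarrow> nat) set
                        \<Rightarrow> (('a \<Rightarrow> nat) \<Rightarrow> ('b \<Rightarrow> nat)) \<Rightarrow> bool" where
  "alg_hom n S A T B h \<longleftrightarrow> h \<in> A \<rightarrow> B \<and>
     h (\<lambda>s\<in>S. 0) = (\<lambda>t\<in>T. 0) \<and> h (\<lambda>s\<in>S. n - 1) = (\<lambda>t\<in>T. n - 1) \<and>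
     (\<forall>x\<in>A. \<forall>y\<in>A.
        h (\<lambda>s\<in>S. min (x s) (y s)) = (\<lambda>t\<in>T. min (h x t) (h y t)) \<and>
        h (\<lambda>s\<in>S. max (x s) (y s)) = (\<lambda>t\<in>T. max (h x t) (h y t)) \<and>
        h (\<lambda>s\<in>S. himp n (x s) (y s)) = (\<lambda>t\<in>T. himp n (h x t) (h y t)))"

definition alg_iso :: "nat \<Rightarrow> 'a set \<Rightarrow> ('a \<Rightarrow> nat) set \<Rightarrow> 'b set \<Rightarrow> ('b \<Rightarrow> nat) set
                        \<Rightarrow> (('a \<Rightarrow> nat) \<Rightarrow> ('b \<Rightarrow> nat)) \<Rightarrow> bool" where
  "alg_iso n S A T B h \<longleftrightarrow> alg_hom n S A T B h \<and> bij_betw h A B"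

definition hom_to_C :: "nat \<Rightarrow> 'a set \<Rightarrow> ('a \<Rightarrow> nat) set \<Rightarrow> (('a \<Rightarrow> nat) \<Rightarrow> nat) \<Rightarrow> bool" where
  "hom_to_C n S A h \<longleftrightarrow> h \<in> A \<rightarrow> {..<n} \<and>
     h (\<lambda>s\<in>S. 0) = 0 \<and> h (\<lambda>s\<in>S. n - 1) = n - 1 \<and>
     (\<forall>x\<in>A. \<forall>y\<in>A.
        h (\<lambda>s\<in>S. min (x s) (y s)) = min (h x) (h y) \<and>
        h (\<lambda>s\<in>S. max (x s) (y s)) = max (h x) (h y) \<and>
        h (\<lambda>s\<in>S. himp n (x s) (y s)) = himp n (h x) (h y))"

text \<open>D(A) = G_n(A, C_n), as a subset of C_n^A.\<close>
definition Dfun :: "nat \<Rightarrow> 'a set \<Rightarrow> ('a \<Rightarrow> nat) set \<Rightarrow> (('a \<Rightarrow> nat) \<Rightarrow> nat) set" where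
  "Dfun n S A = {h \<in> PiE A (\<lambda>_. {..<n}). hom_to_C n S A h}"

section \<open>Single-sorted total alter egos (G, R) of C_n with discrete topology\<close>

text \<open>An operation of arity k is a pair (k, g), g applied to lists of length k;
  a relation of arity k is a pair (k, r), r a set of lists of length k.\<close>

definition tuples :: "nat \<Rightarrow> nat \<Rightarrow> nat list set" where
  "tuples n k = {xs. length xs = k \<and> set xs \<subseteq> {..<n}}"

definition alg_rel :: "nat \<Rightarrow> nat \<Rightarrow> nat list set \<Rightarrow> bool" where
  "alg_rel n k r \<longleftrightarrow> r \<subseteq> tuples n k \<and>
     replicate k 0 \<in> r \<and> replicate k (n - 1) \<in> r \<and>
     (\<forall>xs\<in>r. \<forall>ys\<in>r. map2 min xs ys \<in> r \<and> map2 max xs ys \<in> r \<and> map2 (himp n) xs ys \<in> r)"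

definition graph_op :: "nat \<Rightarrow> nat \<Rightarrow> (nat list \<Rightarrow> nat) \<Rightarrow> nat list set" where
  "graph_op n k g = {xs @ [g xs] | xs. xs \<in> tuples n k}"

definition alter_ego :: "nat \<Rightarrow> (nat \<times> (nat list \<Rightarrow> nat)) set \<Rightarrow> (nat \<times> nat list set) set \<Rightarrow> bool" where
  "alter_ego n G R \<longleftrightarrow>
     (\<forall>(k, g)\<in>G. (\<forall>xs\<in>tuples n k. g xs < n) \<and> alg_rel n (Suc k) (graph_op n k g)) \<and>
     (\<forall>(k, r)\<in>R. alg_rel n k r)"

section \<open>The class X = IS_c P^+ of the alter ego: closed substructures of powers\<close>

definition powtop :: "nat \<Rightarrow> 'a set \<Rightarrow> ('a \<Rightarrow> nat) topology" where
  "powtop n S = product_topology (\<lambda>_. discrete_topology {..<n}) S"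

definition papp :: "'a set \<Rightarrow> (nat list \<Rightarrow> nat) \<Rightarrow> ('a \<Rightarrow> nat) list \<Rightarrow> ('a \<Rightarrow> nat)" where
  "papp S g xs = (\<lambda>s\<in>S. g (map (\<lambda>x. x s) xs))"

definition rel_holds :: "'a set \<Rightarrow> nat list set \<Rightarrow> ('a \<Rightarrow> nat) list \<Rightarrow> bool" where
  "rel_holds S r xs \<longleftrightarrow> (\<forall>s\<in>S. map (\<lambda>x. x s) xs \<in> r)"

definition in_X :: "nat \<Rightarrow> (nat \<times> (nat list \<Rightarrow> nat)) set \<Rightarrow> 'a set \<Rightarrow> ('a \<Rightarrow> nat) set \<Rightarrow> bool" where
  "in_X n G S X \<longleftrightarrow> X \<subseteq> PiE S (\<lambda>_. {..<n}) \<and>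
     closedin (powtop n S) X \<and>
     (\<forall>(k, g)\<in>G. \<forall>xs. length xs = k \<and> set xs \<subseteq> X \<longrightarrow> papp S g xs \<in> X)"

definition str_mor :: "nat \<Rightarrow> (nat \<times> (nat list \<Rightarrow> nat)) set \<Rightarrow> (nat \<times> nat list set) set
     \<Rightarrow> 'a set \<Rightarrow> ('a \<Rightarrow> nat) set \<Rightarrow> 'b set \<Rightarrow> ('b \<Rightarrow> nat) set \<Rightarrow> (('a \<Rightarrow> nat) \<Rightarrow> ('b \<Rightarrow> nat)) \<Rightarrow> bool" where
  "str_mor n G R S X T Y \<phi> \<longleftrightarrow> \<phi> \<in> X \<rightarrow> Y \<and>
     continuous_map (subtopology (powtop n S) X) (subtopology (powtop n T) Y) \<phi> \<and>
     (\<forall>(k, g)\<in>G. \<forall>xs. length xs = k \<and> set xs \<subseteq> X \<longrightarrow> \<phi> (papp S g xs) = papp T g (map \<phi> xs)) \<and>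
     (\<forall>(k, r)\<in>R. \<forall>xs. length xs = k \<and> set xs \<subseteq> X \<and> rel_holds S r xs \<longrightarrow> rel_holds T r (map \<phi> xs))"

definition str_iso :: "nat \<Rightarrow> (nat \<times> (nat list \<Rightarrow> nat)) set \<Rightarrow> (nat \<times> nat list set) set
     \<Rightarrow> 'a set \<Rightarrow> ('a \<Rightarrow> nat) set \<Rightarrow> 'b set \<Rightarrow> ('b \<Rightarrow> nat) set \<Rightarrow> (('a \<Rightarrow> nat) \<Rightarrow> ('b \<Rightarrow> nat)) \<Rightarrow> bool" where
  "str_iso n G R S X T Y \<phi> \<longleftrightarrow> bij_betw \<phi> X Y \<and> str_mor n G R S X T Y \<phi> \<and>
     str_mor n G R T Y S X (inv_into X \<phi>)"

definition str_emb :: "nat \<Rightarrow> (nat \<times> (nat list \<Rightarrow> nat)) set \<Rightarrow> (nat \<times> nat list set) set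
     \<Rightarrow> 'a set \<Rightarrow> ('a \<Rightarrow> nat) set \<Rightarrow> 'b set \<Rightarrow> ('b \<Rightarrow> nat) set \<Rightarrow> (('a \<Rightarrow> nat) \<Rightarrow> ('b \<Rightarrow> nat)) \<Rightarrow> bool" where
  "str_emb n G R S X T Y \<phi> \<longleftrightarrow> str_mor n G R S X T Y \<phi> \<and> \<phi> ` X \<subseteq> Y \<and>
     in_X n G T (\<phi> ` X) \<and> str_iso n G R S X T (\<phi> ` X) \<phi>"

definition mor_to_C :: "nat \<Rightarrow> (nat \<times> (nat list \<Rightarrow> nat)) set \<Rightarrow> (nat \<times> nat list set) set
     \<Rightarrow> 'a set \<Rightarrow> ('a \<Rightarrow> nat) set \<Rightarrow> (('a \<Rightarrow> nat) \<Rightarrow> nat) \<Rightarrow> bool" where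
  "mor_to_C n G R S X \<alpha> \<longleftrightarrow> \<alpha> \<in> X \<rightarrow> {..<n} \<and>
     continuous_map (subtopology (powtop n S) X) (discrete_topology {..<n}) \<alpha> \<and>
     (\<forall>(k, g)\<in>G. \<forall>xs. length xs = k \<and> set xs \<subseteq> X \<longrightarrow> \<alpha> (papp S g xs) = g (map \<alpha> xs)) \<and>
     (\<forall>(k, r)\<in>R. \<forall>xs. length xs = k \<and> set xs \<subseteq> X \<and> rel_holds S r xs \<longrightarrow> map \<alpha> xs \<in> r)"

text \<open>E(X) = X(X, alter ego), as a subset of C_n^X.\<close>
definition Efun :: "nat \<Rightarrow> (nat \<times> (nat list \<Rightarrow> nat)) set \<Rightarrow> (nat \<times> nat list set) set
     \<Rightarrow> 'a set \<Rightarrow> ('a \<Rightarrow> nat) set \<Rightarrow> (('a \<Rightarrow> nat) \<Rightarrow> nat) set" where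
  "Efun n G R S X = {\<alpha> \<in> PiE X (\<lambda>_. {..<n}). mor_to_C n G R S X \<alpha>}"

definition evalA :: "nat \<Rightarrow> 'a set \<Rightarrow> ('a \<Rightarrow> nat) set \<Rightarrow> ('a \<Rightarrow> nat) \<Rightarrow> ((('a \<Rightarrow> nat) \<Rightarrow> nat) \<Rightarrow> nat)" where
  "evalA n S A a = (\<lambda>h\<in>Dfun n S A. h a)"

definition evalX :: "nat \<Rightarrow> (nat \<times> (nat list \<Rightarrow> nat)) set \<Rightarrow> (nat \<times> nat list set) set
     \<Rightarrow> 'a set \<Rightarrow> ('a \<Rightarrow> nat) set \<Rightarrow> ('a \<Rightarrow> nat) \<Rightarrow> ((('a \<Rightarrow> nat) \<Rightarrow> nat) \<Rightarrow> nat)" where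
  "evalX n G R S X x = (\<lambda>\<alpha>\<in>Efun n G R S X. \<alpha> x)"

text \<open>Strong duality, with all algebras and structures taken (up to isomorphism) as
  subobjects of powers indexed by subsets of the type 'i.\<close>
definition strong_duality :: "'i itself \<Rightarrow> nat \<Rightarrow> (nat \<times> (nat list \<Rightarrow> nat)) set
     \<Rightarrow> (nat \<times> nat list set) set \<Rightarrow> bool" where
  "strong_duality _ n G R \<longleftrightarrow>
     \<comment> \<open>duality: each e_A is an isomorphism A \<rightarrow> ED(A)\<close>
     (\<forall>(S::'i set) A. subalg n S A \<longrightarrow>
        alg_iso n S A (Dfun n S A) (Efun n G R A (Dfun n S A)) (evalA n S A)) \<and>
     \<comment> \<open>full: each epsilon_X is an isomorphism X \<rightarrow> DE(X)\<close>
     (\<forall>(S::'i set) X. in_X n G S X \<longrightarrow>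
        str_iso n G R S X (Efun n G R S X) (Dfun n X (Efun n G R S X)) (evalX n G R S X)) \<and>
     \<comment> \<open>strong: the alter ego is injective in X with respect to embeddings\<close>
     (\<forall>(S::'i set) X (T::'i set) Y \<phi>. in_X n G S X \<and> in_X n G T Y \<and> str_emb n G R S X T Y \<phi> \<longrightarrow>
        (\<forall>\<alpha>\<in>Efun n G R S X. \<exists>\<beta>\<in>Efun n G R T Y. \<forall>x\<in>X. \<beta> (\<phi> x) = \<alpha> x))"

end

theory Submission
  imports Defs
begin

(* Every total operation of an alter ego of C_n is a homomorphism C_n^k \<rightarrow> C_n, hence preserves
   the up-sets {1, ..., n - 1} and, as n \<ge> 4, {2, ..., n - 1}; so both are closed substructures
   Y \<supseteq> Z of the one-point power of the alter ego.  Duality at the three-element subalgebra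
   B = {0 < 2 < n - 1} forces every morphism Y \<rightarrow> C_n to be c \<mapsto> h_c(v) for some v \<in> B, where
   h_c : B \<rightarrow> C_n sends 2 to c.  By injectivity every morphism Z \<rightarrow> C_n extends to Y, so E(Z)
   consists of the two constants and the inclusion only, a three-element chain.  Its homomorphism
   into C_n sending the inclusion to 1 is not evaluation at a point of Z, since all values on Z
   are at least 2: the duality is not full at Z. *)

lemma graph_op_snoc_iff:
  "length zs = k \<Longrightarrow> zs @ [v] \<in> graph_op n k g \<longleftrightarrow> zs \<in> tuples n k \<and> v = g zs"
  by (auto simp: graph_op_def)

lemma graph_op_map2:
  assumes xs: "xs \<in> tuples n k" and ys: "ys \<in> tuples n k"
    and closed: "\<forall>us\<in>graph_op n k g. \<forall>ws\<in>graph_op n k g. map2 f us ws \<in> graph_op n k g"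
  shows "g (map2 f xs ys) = f (g xs) (g ys)"
proof -
  have len: "length xs = k" "length ys = k"
    using xs ys by (auto simp: tuples_def)
  have "xs @ [g xs] \<in> graph_op n k g" "ys @ [g ys] \<in> graph_op n k g"
    using xs ys len by (simp_all add: graph_op_snoc_iff)
  with closed have "map2 f xs ys @ [f (g xs) (g ys)] \<in> graph_op n k g"
    using len by fastforce
  then show ?thesis
    using len by (simp add: graph_op_snoc_iff)
qed

lemma graph_op_replicate: "replicate (Suc k) a \<in> graph_op n k g \<Longrightarrow> g (replicate k a) = a"
  using graph_op_snoc_iff[of "replicate k a" k a n g] by (simp add: replicate_append_same[symmetric])

lemma replicate_in_tuples: "a < n \<Longrightarrow> replicate k a \<in> tuples n k"
  by (auto simp: tuples_def set_replicate_conv_if)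

lemma map2_replicate_right: "length xs = k \<Longrightarrow> map2 f xs (replicate k a) = map (\<lambda>x. f x a) xs"
  by (induction xs arbitrary: k) auto

context
  fixes n G R k g
  assumes alter_ego: "alter_ego n G R" and op: "(k, g) \<in> G"
begin

private lemma graph_alg_rel: "alg_rel n (Suc k) (graph_op n k g)"
  using alter_ego op by (auto simp: alter_ego_def)

lemma alter_ego_op_lt: "xs \<in> tuples n k \<Longrightarrow> g xs < n"
  using alter_ego op by (auto simp: alter_ego_def)

lemma alter_ego_op_bot: "g (replicate k 0) = 0"
  using graph_alg_rel by (intro graph_op_replicate[where n = n]) (simp add: alg_rel_def)

lemma alter_ego_op_top: "g (replicate k (n - 1)) = n - 1"
  using graph_alg_rel by (intro graph_op_replicate[where n = n]) (simp add: alg_rel_def)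

lemma alter_ego_op_min: "xs \<in> tuples n k \<Longrightarrow> ys \<in> tuples n k \<Longrightarrow> g (map2 min xs ys) = min (g xs) (g ys)"
  using graph_alg_rel by (intro graph_op_map2) (auto simp: alg_rel_def)

lemma alter_ego_op_max: "xs \<in> tuples n k \<Longrightarrow> ys \<in> tuples n k \<Longrightarrow> g (map2 max xs ys) = max (g xs) (g ys)"
  using graph_alg_rel by (intro graph_op_map2) (auto simp: alg_rel_def)

lemma alter_ego_op_himp:
  "xs \<in> tuples n k \<Longrightarrow> ys \<in> tuples n k \<Longrightarrow> g (map2 (himp n) xs ys) = himp n (g xs) (g ys)"
  using graph_alg_rel by (intro graph_op_map2) (auto simp: alg_rel_def)

lemma alter_ego_op_ge1:
  assumes n: "2 \<le> n" and cs: "cs \<in> tuples n k" and ge: "\<forall>c\<in>set cs. 1 \<le> c"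
  shows "1 \<le> g cs"
proof (rule ccontr)
  assume "\<not> 1 \<le> g cs"
  then have "g cs = 0" by simp
  have len: "length cs = k" using cs by (simp add: tuples_def)
  have "map2 (himp n) cs (replicate k 0) = replicate k 0"
    using ge len by (auto simp: map2_replicate_right himp_def intro!: replicate_eqI)
  then have "0 = himp n (g cs) 0"
    using alter_ego_op_himp[OF cs replicate_in_tuples, of 0] n by (simp add: alter_ego_op_bot)
  with \<open>g cs = 0\<close> n show False by (simp add: himp_def)
qed

lemma alter_ego_op_ge2:
  assumes n: "3 \<le> n" and cs: "cs \<in> tuples n k" and ge: "\<forall>c\<in>set cs. 2 \<le> c"
  shows "2 \<le> g cs"
proof -
  let ?ones = "replicate k (1::nat)"
  have len: "length cs = k" using cs by (simp add: tuples_def)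
  have ones: "?ones \<in> tuples n k" using n by (simp add: replicate_in_tuples)
  have "map2 min cs ?ones = ?ones"
    using ge len by (force simp: map2_replicate_right intro!: replicate_eqI)
  then have below: "g ?ones \<le> g cs"
    using alter_ego_op_min[OF cs ones] by simp
  have "map2 (himp n) cs ?ones = ?ones"
    using ge len by (force simp: map2_replicate_right himp_def intro!: replicate_eqI)
  then have himp_eq: "g ?ones = himp n (g cs) (g ?ones)"
    using alter_ego_op_himp[OF cs ones] by simp
  have "1 \<le> g ?ones"
    using alter_ego_op_ge1[OF _ ones] n by simp
  moreover have "g ?ones = n - 1" if "g cs \<le> g ?ones"
    using himp_eq that by (simp add: himp_def)
  ultimately show ?thesis
    using below n by linarith
qed

end

lemma in_X_subset_PiE: "in_X n G S X \<Longrightarrow> X \<subseteq> PiE S (\<lambda>_. {..<n})"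
  by (simp add: in_X_def)

lemma in_X_papp:
  "in_X n G S X \<Longrightarrow> (k, g) \<in> G \<Longrightarrow> length xs = k \<Longrightarrow> set xs \<subseteq> X \<Longrightarrow> papp S g xs \<in> X"
  unfolding in_X_def by blast

lemma topspace_powtop [simp]: "topspace (powtop n S) = PiE S (\<lambda>_. {..<n})"
  by (simp add: powtop_def)

lemma subtopology_powtop_finite:
  "X \<subseteq> PiE S (\<lambda>_. {..<n}) \<Longrightarrow> finite X \<Longrightarrow> subtopology (powtop n S) X = discrete_topology X"
  by (intro subtopology_eq_discrete_topology_finite Hausdorff_imp_t1_space)
    (auto simp: powtop_def Hausdorff_space_product_topology)

lemma in_X_finiteI:
  assumes "finite X" and "X \<subseteq> PiE S (\<lambda>_. {..<n})"
    and "\<And>k g xs. (k, g) \<in> G \<Longrightarrow> length xs = k \<Longrightarrow> set xs \<subseteq> X \<Longrightarrow> papp S g xs \<in> X"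
  shows "in_X n G S X"
  using assms unfolding in_X_def
  by (auto intro!: closedin_Hausdorff_finite simp: powtop_def Hausdorff_space_product_topology)

lemma str_mor_finiteI:
  assumes "finite X" and "X \<subseteq> PiE S (\<lambda>_. {..<n})" and "Y \<subseteq> PiE T (\<lambda>_. {..<n})"
    and "\<phi> \<in> X \<rightarrow> Y"
    and "\<And>k g xs. (k, g) \<in> G \<Longrightarrow> length xs = k \<Longrightarrow> set xs \<subseteq> X \<Longrightarrow>
           \<phi> (papp S g xs) = papp T g (map \<phi> xs)"
    and "\<And>k r xs. (k, r) \<in> R \<Longrightarrow> length xs = k \<Longrightarrow> set xs \<subseteq> X \<Longrightarrow> rel_holds S r xs \<Longrightarrow>
           rel_holds T r (map \<phi> xs)"
  shows "str_mor n G R S X T Y \<phi>"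
  using assms unfolding str_mor_def
  by (auto simp: subtopology_powtop_finite continuous_map_in_subtopology
      continuous_map_from_discrete_topology)

lemma Efun_finiteI:
  assumes "finite X" and "X \<subseteq> PiE S (\<lambda>_. {..<n})" and "\<alpha> \<in> PiE X (\<lambda>_. {..<n})"
    and "\<And>k g xs. (k, g) \<in> G \<Longrightarrow> length xs = k \<Longrightarrow> set xs \<subseteq> X \<Longrightarrow>
           \<alpha> (papp S g xs) = g (map \<alpha> xs)"
    and "\<And>k r xs. (k, r) \<in> R \<Longrightarrow> length xs = k \<Longrightarrow> set xs \<subseteq> X \<Longrightarrow> rel_holds S r xs \<Longrightarrow>
           map \<alpha> xs \<in> r"
  shows "\<alpha> \<in> Efun n G R S X"
  using assms unfolding Efun_def mor_to_C_def
  by (auto simp: subtopology_powtop_finite continuous_map_from_discrete_topology PiE_iff)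

lemma Efun_PiE: "\<alpha> \<in> Efun n G R S X \<Longrightarrow> \<alpha> \<in> PiE X (\<lambda>_. {..<n})"
  by (simp add: Efun_def)

lemma Efun_papp:
  "\<alpha> \<in> Efun n G R S X \<Longrightarrow> (k, g) \<in> G \<Longrightarrow> length xs = k \<Longrightarrow> set xs \<subseteq> X \<Longrightarrow>
    \<alpha> (papp S g xs) = g (map \<alpha> xs)"
  unfolding Efun_def mor_to_C_def by blast

lemma Efun_rel:
  "\<alpha> \<in> Efun n G R S X \<Longrightarrow> (k, r) \<in> R \<Longrightarrow> length xs = k \<Longrightarrow> set xs \<subseteq> X \<Longrightarrow>
    rel_holds S r xs \<Longrightarrow> map \<alpha> xs \<in> r"
  unfolding Efun_def mor_to_C_def by blast

lemma DfunI:
  assumes "h \<in> PiE A (\<lambda>_. {..<n})"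
    and "h (\<lambda>s\<in>S. 0) = 0" and "h (\<lambda>s\<in>S. n - 1) = n - 1"
    and "\<And>x y. x \<in> A \<Longrightarrow> y \<in> A \<Longrightarrow> h (\<lambda>s\<in>S. min (x s) (y s)) = min (h x) (h y)"
    and "\<And>x y. x \<in> A \<Longrightarrow> y \<in> A \<Longrightarrow> h (\<lambda>s\<in>S. max (x s) (y s)) = max (h x) (h y)"
    and "\<And>x y. x \<in> A \<Longrightarrow> y \<in> A \<Longrightarrow> h (\<lambda>s\<in>S. himp n (x s) (y s)) = himp n (h x) (h y)"
  shows "h \<in> Dfun n S A"
  using assms by (auto simp: Dfun_def hom_to_C_def PiE_iff)

lemma Dfun_papp_closed:
  assumes alter_ego: "alter_ego n G R" and op: "(k, g) \<in> G" and A: "subalg n S A"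
    and len: "length hs = k" and hs: "set hs \<subseteq> Dfun n S A"
  shows "papp A g hs \<in> Dfun n S A"
proof -
  let ?at = "\<lambda>a. map (\<lambda>h. h a) hs"
  have hom: "hom_to_C n S A h" if "h \<in> set hs" for h
    using hs that by (auto simp: Dfun_def)
  have tuple: "?at a \<in> tuples n k" if "a \<in> A" for a
    using hom len that by (fastforce simp: tuples_def hom_to_C_def)
  have val: "papp A g hs a = g (?at a)" if "a \<in> A" for a
    using that by (simp add: papp_def)
  have const: "papp A g hs (\<lambda>s\<in>S. c) = c"
    if "(\<lambda>s\<in>S. c) \<in> A" and "\<forall>h\<in>set hs. h (\<lambda>s\<in>S. c) = c" and "g (replicate k c) = c" for c
  proof -
    have "?at (\<lambda>s\<in>S. c) = replicate k c"
      using that len by (auto intro!: replicate_eqI)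
    then show ?thesis
      using that by (simp add: val)
  qed
  have binop: "papp A g hs (\<lambda>s\<in>S. f (x s) (y s)) = f (papp A g hs x) (papp A g hs y)"
    if "x \<in> A" "y \<in> A" "(\<lambda>s\<in>S. f (x s) (y s)) \<in> A"
      and "\<forall>h\<in>set hs. h (\<lambda>s\<in>S. f (x s) (y s)) = f (h x) (h y)"
      and "g (map2 f (?at x) (?at y)) = f (g (?at x)) (g (?at y))" for f x y
    using that by (simp add: val map2_map_map cong: map_cong)
  show ?thesis
  proof (rule DfunI)
    show "papp A g hs \<in> PiE A (\<lambda>_. {..<n})"
      using alter_ego_op_lt[OF alter_ego op tuple] by (auto simp: papp_def)
    show "papp A g hs (\<lambda>s\<in>S. 0) = 0" "papp A g hs (\<lambda>s\<in>S. n - 1) = n - 1"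
      using A hom alter_ego_op_bot[OF alter_ego op] alter_ego_op_top[OF alter_ego op]
      by (auto simp: subalg_def hom_to_C_def intro!: const)
    fix x y assume "x \<in> A" "y \<in> A"
    then show "papp A g hs (\<lambda>s\<in>S. min (x s) (y s)) = min (papp A g hs x) (papp A g hs y)"
      and "papp A g hs (\<lambda>s\<in>S. max (x s) (y s)) = max (papp A g hs x) (papp A g hs y)"
      and "papp A g hs (\<lambda>s\<in>S. himp n (x s) (y s)) = himp n (papp A g hs x) (papp A g hs y)"
      using A hom tuple alter_ego_op_min[OF alter_ego op] alter_ego_op_max[OF alter_ego op]
        alter_ego_op_himp[OF alter_ego op]
      by (auto simp: subalg_def hom_to_C_def intro!: binop)
  qed
qed

lemma str_emb_inclusion:
  assumes X: "in_X n G S X" and Y: "in_X n G S Y" and "X \<subseteq> Y" and "finite Y"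
  shows "str_emb n G R S X S Y id"
proof -
  have "finite X"
    using \<open>X \<subseteq> Y\<close> \<open>finite Y\<close> by (rule finite_subset)
  have PiE: "X \<subseteq> PiE S (\<lambda>_. {..<n})" "Y \<subseteq> PiE S (\<lambda>_. {..<n})"
    using X Y by (simp_all add: in_X_subset_PiE)
  have "str_mor n G R S X S Z id" if "X \<subseteq> Z" "Z \<subseteq> PiE S (\<lambda>_. {..<n})" for Z
    using that \<open>finite X\<close> PiE by (intro str_mor_finiteI) auto
  moreover have "str_mor n G R S X S X (inv_into X id)"
  proof -
    have inv: "inv_into X id x = x" if "x \<in> X" for x
      using that by (simp add: inv_into_f_f)
    have map_inv: "map (inv_into X id) xs = xs" if "set xs \<subseteq> X" for xs
      using that inv by (simp add: map_idI subset_iff)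
    show ?thesis
      using \<open>finite X\<close> PiE inv map_inv in_X_papp[OF X]
      by (intro str_mor_finiteI) auto
  qed
  ultimately show ?thesis
    using \<open>X \<subseteq> Y\<close> PiE X by (simp add: str_emb_def str_iso_def)
qed

definition pt :: "'i \<Rightarrow> nat \<Rightarrow> 'i \<Rightarrow> nat" where
  "pt t c = (\<lambda>s\<in>{t}. c)"

abbreviation seg :: "'i \<Rightarrow> nat \<Rightarrow> nat \<Rightarrow> ('i \<Rightarrow> nat) set" where
  "seg t m n \<equiv> pt t ` {m..<n}"

lemma restrict_singleton_eq_pt: "(\<lambda>s\<in>{t}. f s) = pt t (f t)"
  unfolding pt_def by (rule restrict_ext) simp

lemma pt_apply [simp]: "pt t c t = c"
  by (simp add: pt_def)

lemma pt_inject [simp]: "pt t a = pt t b \<longleftrightarrow> a = b"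
  by (metis pt_apply)

lemma pt_in_PiE [simp]: "pt t c \<in> PiE {t} (\<lambda>_. {..<n}) \<longleftrightarrow> c < n"
  by (simp add: pt_def)

lemma papp_singleton: "papp {t} g xs = pt t (g (map (\<lambda>x. x t) xs))"
  unfolding papp_def by (rule restrict_singleton_eq_pt)

lemma in_X_segI:
  assumes alter_ego: "alter_ego n G R"
    and upward: "\<And>k g cs. (k, g) \<in> G \<Longrightarrow> cs \<in> tuples n k \<Longrightarrow> \<forall>c\<in>set cs. m \<le> c \<Longrightarrow> m \<le> g cs"
  shows "in_X n G {t} (seg t m n)"
proof (rule in_X_finiteI)
  show "seg t m n \<subseteq> PiE {t} (\<lambda>_. {..<n})"
    by (intro image_subsetI) simp
  fix k g xs assume op: "(k, g) \<in> G" and "length xs = k" and xs: "set xs \<subseteq> seg t m n"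
  then have cs: "map (\<lambda>x. x t) xs \<in> tuples n k" and "\<forall>c\<in>set (map (\<lambda>x. x t) xs). m \<le> c"
    by (auto simp: tuples_def)
  with op have "g (map (\<lambda>x. x t) xs) \<in> {m..<n}"
    using upward alter_ego_op_lt[OF alter_ego op cs] by simp
  then show "papp {t} g xs \<in> seg t m n"
    by (simp add: papp_singleton)
qed simp

lemma in_X_seg1: "alter_ego n G R \<Longrightarrow> 2 \<le> n \<Longrightarrow> in_X n G {t} (seg t 1 n)"
  by (intro in_X_segI alter_ego_op_ge1) auto

lemma in_X_seg2: "alter_ego n G R \<Longrightarrow> 3 \<le> n \<Longrightarrow> in_X n G {t} (seg t 2 n)"
  by (intro in_X_segI alter_ego_op_ge2) auto

lemma Efun_comp_evaluation:
  assumes alter_ego: "alter_ego n G R" and A: "subalg n S A" and "finite A" and a: "a \<in> A"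
    and into: "\<And>h. h \<in> Dfun n S A \<Longrightarrow> pt t (h a) \<in> Y"
    and \<beta>: "\<beta> \<in> Efun n G R {t} Y"
  shows "(\<lambda>h\<in>Dfun n S A. \<beta> (pt t (h a))) \<in> Efun n G R A (Dfun n S A)"
    (is "?\<gamma> \<in> _")
proof -
  let ?D = "Dfun n S A"
  define ev where "ev h = pt t (h a)" for h :: "('a \<Rightarrow> nat) \<Rightarrow> nat"
  have ev_map: "set (map ev hs) \<subseteq> Y" if "set hs \<subseteq> ?D" for hs
    using that into by (auto simp: ev_def)
  have map_\<gamma>: "map ?\<gamma> hs = map \<beta> (map ev hs)" if "set hs \<subseteq> ?D" for hs
    using that by (auto simp: ev_def subset_iff)
  have D_PiE: "?D \<subseteq> PiE A (\<lambda>_. {..<n})"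
    by (auto simp: Dfun_def)
  show ?thesis
  proof (rule Efun_finiteI[OF _ D_PiE])
    show "finite ?D"
      using D_PiE by (rule finite_subset) (simp add: finite_PiE \<open>finite A\<close>)
    show "?\<gamma> \<in> PiE ?D (\<lambda>_. {..<n})"
      using Efun_PiE[OF \<beta>] into by auto
  next
    fix k g hs assume op: "(k, g) \<in> G" and len: "length hs = k" and hs: "set hs \<subseteq> ?D"
    have "papp A g hs \<in> ?D"
      using Dfun_papp_closed[OF alter_ego op A len hs] .
    then have "?\<gamma> (papp A g hs) = \<beta> (ev (papp A g hs))"
      by (simp add: ev_def)
    also have "\<dots> = \<beta> (papp {t} g (map ev hs))"
      unfolding papp_singleton using a by (simp add: ev_def papp_def o_def)
    also have "\<dots> = g (map \<beta> (map ev hs))"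
      using Efun_papp[OF \<beta> op _ ev_map[OF hs]] len by simp
    finally show "?\<gamma> (papp A g hs) = g (map ?\<gamma> hs)"
      unfolding map_\<gamma>[OF hs] .
  next
    fix k r hs assume rel: "(k, r) \<in> R" and len: "length hs = k" and hs: "set hs \<subseteq> ?D"
      and "rel_holds A r hs"
    then have "rel_holds {t} r (map ev hs)"
      using a by (simp add: rel_holds_def ev_def o_def)
    then show "map ?\<gamma> hs \<in> r"
      unfolding map_\<gamma>[OF hs] using Efun_rel[OF \<beta> rel _ ev_map[OF hs]] len by simp
  qed
qed

abbreviation chain3 :: "nat \<Rightarrow> nat set" where
  "chain3 n \<equiv> {0, 2, n - 1}"

definition chain3_hom :: "nat \<Rightarrow> nat \<Rightarrow> nat \<Rightarrow> nat" where
  "chain3_hom n c v = (if v = 0 then 0 else if v = 2 then c else n - 1)"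

lemma chain3_hom_lt: "c < n \<Longrightarrow> chain3_hom n c v < n"
  by (simp add: chain3_hom_def)

context
  fixes n v w :: nat
  assumes n: "4 \<le> n" and v: "v \<in> chain3 n" and w: "w \<in> chain3 n"
begin

lemma chain3_min: "min v w \<in> chain3 n"
  and chain3_max: "max v w \<in> chain3 n"
  and chain3_himp: "himp n v w \<in> chain3 n"
  using n v w by (auto simp: himp_def)

lemma chain3_hom_min: "chain3_hom n c (min v w) = min (chain3_hom n c v) (chain3_hom n c w)"
  and chain3_hom_max: "chain3_hom n c (max v w) = max (chain3_hom n c v) (chain3_hom n c w)"
  if "c < n"
  using n v w that by (auto simp: chain3_hom_def)

lemma chain3_hom_himp:
  "1 \<le> c \<Longrightarrow> c < n \<Longrightarrow> chain3_hom n c (himp n v w) = himp n (chain3_hom n c v) (chain3_hom n c w)"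
  using n v w by (auto simp: chain3_hom_def himp_def)

end

lemma subalg_chain3:
  assumes n: "4 \<le> n"
  shows "subalg n {t} (pt t ` chain3 n)"
proof -
  let ?B = "pt t ` chain3 n"
  have closed: "(\<lambda>s\<in>{t}. f (x s) (y s)) \<in> ?B"
    if "x \<in> ?B" "y \<in> ?B" and f: "\<And>v w. v \<in> chain3 n \<Longrightarrow> w \<in> chain3 n \<Longrightarrow> f v w \<in> chain3 n"
    for f x y
  proof -
    from that obtain v w where "v \<in> chain3 n" "w \<in> chain3 n" "x = pt t v" "y = pt t w"
      by blast
    then show ?thesis
      unfolding restrict_singleton_eq_pt using f by simp
  qed
  have "(\<lambda>s\<in>{t}. min (x s) (y s)) \<in> ?B" if "x \<in> ?B" "y \<in> ?B" for x y
    using that chain3_min[OF n] by (rule closed)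
  moreover have "(\<lambda>s\<in>{t}. max (x s) (y s)) \<in> ?B" if "x \<in> ?B" "y \<in> ?B" for x y
    using that chain3_max[OF n] by (rule closed)
  moreover have "(\<lambda>s\<in>{t}. himp n (x s) (y s)) \<in> ?B" if "x \<in> ?B" "y \<in> ?B" for x y
    using that chain3_himp[OF n] by (rule closed)
  moreover have "?B \<subseteq> PiE {t} (\<lambda>_. {..<n})"
    using n by (intro image_subsetI) auto
  moreover have "(\<lambda>s\<in>{t}. 0) \<in> ?B" "(\<lambda>s\<in>{t}. n - 1) \<in> ?B"
    unfolding restrict_singleton_eq_pt by simp_all
  ultimately show ?thesis
    unfolding subalg_def by (intro conjI ballI) assumption+
qed

lemma chain3_hom_in_Dfun:
  assumes n: "4 \<le> n" and c: "1 \<le> c" "c < n"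
  shows "(\<lambda>b\<in>pt t ` chain3 n. chain3_hom n c (b t)) \<in> Dfun n {t} (pt t ` chain3 n)"
    (is "?h \<in> _")
proof (rule DfunI)
  have h_pt: "?h (pt t v) = chain3_hom n c v" if "v \<in> chain3 n" for v
    using that by simp
  show "?h \<in> PiE (pt t ` chain3 n) (\<lambda>_. {..<n})"
    using chain3_hom_lt[OF c(2)] by auto
  show "?h (\<lambda>s\<in>{t}. 0) = 0" "?h (\<lambda>s\<in>{t}. n - 1) = n - 1"
    unfolding restrict_singleton_eq_pt using n by (auto simp: chain3_hom_def)
  fix x y assume "x \<in> pt t ` chain3 n" "y \<in> pt t ` chain3 n"
  then obtain v w where v: "v \<in> chain3 n" and w: "w \<in> chain3 n" and xy: "x = pt t v" "y = pt t w"
    by blast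
  show "?h (\<lambda>s\<in>{t}. min (x s) (y s)) = min (?h x) (?h y)"
    unfolding xy restrict_singleton_eq_pt pt_apply h_pt[OF chain3_min[OF n v w]] h_pt[OF v] h_pt[OF w]
    by (rule chain3_hom_min[OF n v w c(2)])
  show "?h (\<lambda>s\<in>{t}. max (x s) (y s)) = max (?h x) (?h y)"
    unfolding xy restrict_singleton_eq_pt pt_apply h_pt[OF chain3_max[OF n v w]] h_pt[OF v] h_pt[OF w]
    by (rule chain3_hom_max[OF n v w c(2)])
  show "?h (\<lambda>s\<in>{t}. himp n (x s) (y s)) = himp n (?h x) (?h y)"
    unfolding xy restrict_singleton_eq_pt pt_apply h_pt[OF chain3_himp[OF n v w]] h_pt[OF v] h_pt[OF w]
    by (rule chain3_hom_himp[OF n v w c])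
qed

lemma Dfun_chain3_at2:
  assumes n: "4 \<le> n" and h: "h \<in> Dfun n {t} (pt t ` chain3 n)"
  shows "h (pt t 2) \<in> {1..<n}"
proof -
  have "h (pt t (himp n 2 0)) = himp n (h (pt t 2)) (h (pt t 0))"
    and "h (pt t 0) = 0" and "h (pt t 2) < n"
    using h unfolding Dfun_def hom_to_C_def restrict_singleton_eq_pt by auto
  then have "himp n (h (pt t 2)) 0 = 0"
    by (simp add: himp_def)
  with n \<open>h (pt t 2) < n\<close> show ?thesis
    by (auto simp: himp_def split: if_splits)
qed

(* Composing \<beta> with evaluation at 2 gives a morphism D(B) \<rightarrow> C_n, which by duality is evaluation
   at some v \<in> B; testing it on the homomorphism sending 2 to c computes \<beta> c. *)
lemma Efun_seg1_eq_chain3_hom: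
  fixes t :: 'i
  assumes alter_ego: "alter_ego n G R" and n: "4 \<le> n"
    and evaluations: "Efun n G R (pt t ` chain3 n) (Dfun n {t} (pt t ` chain3 n))
                        \<subseteq> evalA n {t} (pt t ` chain3 n) ` pt t ` chain3 n"
    and \<beta>: "\<beta> \<in> Efun n G R {t} (seg t 1 n)"
  shows "\<exists>v\<in>chain3 n. \<forall>c\<in>{1..<n}. \<beta> (pt t c) = chain3_hom n c v"
proof -
  let ?B = "pt t ` chain3 n"
  let ?\<gamma> = "\<lambda>h\<in>Dfun n {t} ?B. \<beta> (pt t (h (pt t 2)))"
  have "?\<gamma> \<in> Efun n G R ?B (Dfun n {t} ?B)"
    using Dfun_chain3_at2[OF n, of _ t]
    by (intro Efun_comp_evaluation[OF alter_ego subalg_chain3[OF n] _ _ _ \<beta>]) (auto intro!: imageI)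
  with evaluations obtain v where v: "v \<in> chain3 n" and \<gamma>_eval: "?\<gamma> = evalA n {t} ?B (pt t v)"
    by blast
  have "\<beta> (pt t c) = chain3_hom n c v" if c: "c \<in> {1..<n}" for c
  proof -
    let ?h = "\<lambda>b\<in>?B. chain3_hom n c (b t)"
    have h: "?h \<in> Dfun n {t} ?B"
      using c by (intro chain3_hom_in_Dfun[OF n]) auto
    then have "\<beta> (pt t c) = ?\<gamma> ?h"
      by (simp add: chain3_hom_def)
    also have "\<dots> = chain3_hom n c v"
      using h v by (simp only: \<gamma>_eval evalA_def restrict_apply') simp
    finally show ?thesis .
  qed
  with v show ?thesis
    by blast
qed

(* For v = 0, 2, n - 1: the constant 0, the inclusion, and the constant n - 1. *)
definition seg_mor :: "nat \<Rightarrow> 'i \<Rightarrow> nat \<Rightarrow> ('i \<Rightarrow> nat) \<Rightarrow> nat" where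
  "seg_mor n t v = (\<lambda>z\<in>seg t 2 n. chain3_hom n (z t) v)"

lemma map_chain3_hom:
  "v \<in> chain3 n \<Longrightarrow> map (\<lambda>c. chain3_hom n c v) cs = (if v = 2 then cs else replicate (length cs) v)"
  by (induction cs) (auto simp: chain3_hom_def)

lemma seg_mor_in_Efun:
  assumes alter_ego: "alter_ego n G R" and n: "4 \<le> n" and v: "v \<in> chain3 n"
  shows "seg_mor n t v \<in> Efun n G R {t} (seg t 2 n)"
proof -
  have map_seg_mor: "map (seg_mor n t v) xs
      = (if v = 2 then map (\<lambda>x. x t) xs else replicate (length xs) v)"
    if "set xs \<subseteq> seg t 2 n" for xs
  proof -
    have "map (seg_mor n t v) xs = map (\<lambda>c. chain3_hom n c v) (map (\<lambda>x. x t) xs)"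
      using that by (auto simp: seg_mor_def subset_iff)
    also have "\<dots> = (if v = 2 then map (\<lambda>x. x t) xs else replicate (length xs) v)"
      unfolding map_chain3_hom[OF v] by simp
    finally show ?thesis .
  qed
  show ?thesis
  proof (rule Efun_finiteI)
    show "seg t 2 n \<subseteq> PiE {t} (\<lambda>_. {..<n})"
      by (intro image_subsetI) simp
    show "seg_mor n t v \<in> PiE (seg t 2 n) (\<lambda>_. {..<n})"
      using chain3_hom_lt by (auto simp: seg_mor_def)
  next
    fix k g xs assume op: "(k, g) \<in> G" and len: "length xs = k" and xs: "set xs \<subseteq> seg t 2 n"
    have "papp {t} g xs \<in> seg t 2 n"
      using in_X_papp[OF in_X_seg2 op len xs] alter_ego n by simp
    then have "seg_mor n t v (papp {t} g xs) = chain3_hom n (g (map (\<lambda>x. x t) xs)) v"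
      by (simp add: seg_mor_def papp_singleton)
    also have "\<dots> = g (map (seg_mor n t v) xs)"
      using v n len alter_ego_op_bot[OF alter_ego op] alter_ego_op_top[OF alter_ego op]
      unfolding map_seg_mor[OF xs] by (auto simp: chain3_hom_def)
    finally show "seg_mor n t v (papp {t} g xs) = g (map (seg_mor n t v) xs)" .
  next
    fix k r xs assume rel: "(k, r) \<in> R" and len: "length xs = k" and xs: "set xs \<subseteq> seg t 2 n"
      and holds: "rel_holds {t} r xs"
    have "alg_rel n k r"
      using alter_ego rel by (auto simp: alter_ego_def)
    then have "replicate k 0 \<in> r" "replicate k (n - 1) \<in> r"
      by (simp_all add: alg_rel_def)
    moreover have "map (\<lambda>x. x t) xs \<in> r"
      using holds by (simp add: rel_holds_def)
    ultimately show "map (seg_mor n t v) xs \<in> r"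
      unfolding map_seg_mor[OF xs] using v len by auto
  qed simp
qed

lemma Efun_seg2_eq:
  fixes t :: 'i
  assumes alter_ego: "alter_ego n G R" and n: "4 \<le> n"
    and evaluations: "Efun n G R (pt t ` chain3 n) (Dfun n {t} (pt t ` chain3 n))
                        \<subseteq> evalA n {t} (pt t ` chain3 n) ` pt t ` chain3 n"
    and extension: "\<forall>\<alpha>\<in>Efun n G R {t} (seg t 2 n).
                      \<exists>\<beta>\<in>Efun n G R {t} (seg t 1 n). \<forall>x\<in>seg t 2 n. \<beta> x = \<alpha> x"
  shows "Efun n G R {t} (seg t 2 n) = seg_mor n t ` chain3 n"
proof
  show "seg_mor n t ` chain3 n \<subseteq> Efun n G R {t} (seg t 2 n)"
    using seg_mor_in_Efun[OF alter_ego n] by (rule image_subsetI)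
  show "Efun n G R {t} (seg t 2 n) \<subseteq> seg_mor n t ` chain3 n"
  proof
    fix \<alpha> assume \<alpha>: "\<alpha> \<in> Efun n G R {t} (seg t 2 n)"
    obtain \<beta> where \<beta>: "\<beta> \<in> Efun n G R {t} (seg t 1 n)"
      and extends: "\<forall>x\<in>seg t 2 n. \<beta> x = \<alpha> x"
      using bspec[OF extension \<alpha>] by (elim bexE)
    obtain v where v: "v \<in> chain3 n" and \<beta>_eq: "\<forall>c\<in>{1..<n}. \<beta> (pt t c) = chain3_hom n c v"
      using Efun_seg1_eq_chain3_hom[OF alter_ego n evaluations \<beta>] by blast
    have "\<alpha> = seg_mor n t v"
    proof (rule PiE_ext[OF Efun_PiE[OF \<alpha>]])
      show "seg_mor n t v \<in> PiE (seg t 2 n) (\<lambda>_. {..<n})"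
        using Efun_PiE[OF seg_mor_in_Efun[OF alter_ego n v]] .
      fix x assume "x \<in> seg t 2 n"
      then obtain c where c: "c \<in> {2..<n}" and x: "x = pt t c"
        by (elim imageE)
      then have "\<alpha> x = \<beta> (pt t c)"
        using extends \<open>x \<in> seg t 2 n\<close> by simp
      also have "\<dots> = chain3_hom n c v"
        using \<beta>_eq c by simp
      also have "\<dots> = seg_mor n t v x"
        using c x by (simp add: seg_mor_def)
      finally show "\<alpha> x = seg_mor n t v x" .
    qed
    with v show "\<alpha> \<in> seg_mor n t ` chain3 n"
      by (rule rev_image_eqI)
  qed
qed

lemma seg_mor_at2: "4 \<le> n \<Longrightarrow> v \<in> chain3 n \<Longrightarrow> seg_mor n t v (pt t 2) = v"
  by (auto simp: seg_mor_def chain3_hom_def)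

lemma restrict_seg_mor:
  assumes "\<And>c. c \<in> {2..<n} \<Longrightarrow> chain3_hom n c (f v w) = f (chain3_hom n c v) (chain3_hom n c w)"
  shows "(\<lambda>s\<in>seg t 2 n. f (seg_mor n t v s) (seg_mor n t w s)) = seg_mor n t (f v w)"
  unfolding seg_mor_def using assms by (intro restrict_ext) auto

lemma chain3_hom_1_in_Dfun:
  assumes n: "4 \<le> n"
  shows "(\<lambda>e\<in>seg_mor n t ` chain3 n. chain3_hom n 1 (e (pt t 2)))
           \<in> Dfun n (seg t 2 n) (seg_mor n t ` chain3 n)"
    (is "?h \<in> _")
proof (rule DfunI)
  have h_seg_mor: "?h (seg_mor n t v) = chain3_hom n 1 v" if "v \<in> chain3 n" for v
  proof -
    have "seg_mor n t v \<in> seg_mor n t ` chain3 n"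
      using that by (rule imageI)
    then show ?thesis
      by (simp only: restrict_apply' seg_mor_at2[OF n that])
  qed
  show "?h \<in> PiE (seg_mor n t ` chain3 n) (\<lambda>_. {..<n})"
    using chain3_hom_lt n by auto
  have "(\<lambda>s\<in>seg t 2 n. 0) = seg_mor n t 0" "(\<lambda>s\<in>seg t 2 n. n - 1) = seg_mor n t (n - 1)"
    using n by (auto simp: seg_mor_def chain3_hom_def intro!: restrict_ext)
  then show "?h (\<lambda>s\<in>seg t 2 n. 0) = 0" "?h (\<lambda>s\<in>seg t 2 n. n - 1) = n - 1"
    using h_seg_mor[of 0] h_seg_mor[of "n - 1"] n by (simp_all add: chain3_hom_def)
  fix x y assume "x \<in> seg_mor n t ` chain3 n" "y \<in> seg_mor n t ` chain3 n"
  then obtain v w where v: "v \<in> chain3 n" and w: "w \<in> chain3 n"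
    and xy: "x = seg_mor n t v" "y = seg_mor n t w"
    by (elim imageE)
  have one: "1 < n"
    using n by simp
  have "(\<lambda>s\<in>seg t 2 n. min (x s) (y s)) = seg_mor n t (min v w)"
    unfolding xy by (rule restrict_seg_mor) (simp add: chain3_hom_min[OF n v w])
  then show "?h (\<lambda>s\<in>seg t 2 n. min (x s) (y s)) = min (?h x) (?h y)"
    unfolding xy
    by (simp only: h_seg_mor v w chain3_min[OF n v w] chain3_hom_min[OF n v w one])
  have "(\<lambda>s\<in>seg t 2 n. max (x s) (y s)) = seg_mor n t (max v w)"
    unfolding xy by (rule restrict_seg_mor) (simp add: chain3_hom_max[OF n v w])
  then show "?h (\<lambda>s\<in>seg t 2 n. max (x s) (y s)) = max (?h x) (?h y)"
    unfolding xy
    by (simp only: h_seg_mor v w chain3_max[OF n v w] chain3_hom_max[OF n v w one])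
  have "(\<lambda>s\<in>seg t 2 n. himp n (x s) (y s)) = seg_mor n t (himp n v w)"
    unfolding xy by (rule restrict_seg_mor) (simp add: chain3_hom_himp[OF n v w])
  then show "?h (\<lambda>s\<in>seg t 2 n. himp n (x s) (y s)) = himp n (?h x) (?h y)"
    unfolding xy
    by (simp only: h_seg_mor v w chain3_himp[OF n v w] chain3_hom_himp[OF n v w order_refl one])
qed

lemma chain3_hom_1_not_evaluation:
  assumes n: "4 \<le> n"
  shows "(\<lambda>e\<in>seg_mor n t ` chain3 n. chain3_hom n 1 (e (pt t 2)))
           \<notin> (\<lambda>z. \<lambda>e\<in>seg_mor n t ` chain3 n. e z) ` seg t 2 n"
proof
  assume "(\<lambda>e\<in>seg_mor n t ` chain3 n. chain3_hom n 1 (e (pt t 2)))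
            \<in> (\<lambda>z. \<lambda>e\<in>seg_mor n t ` chain3 n. e z) ` seg t 2 n"
  then obtain z where eq: "(\<lambda>e\<in>seg_mor n t ` chain3 n. chain3_hom n 1 (e (pt t 2)))
                             = (\<lambda>e\<in>seg_mor n t ` chain3 n. e z)"
    and z: "z \<in> seg t 2 n"
    by (rule imageE)
  have "seg_mor n t 2 \<in> seg_mor n t ` chain3 n"
    by (rule imageI) simp
  with fun_cong[OF eq, of "seg_mor n t 2"] have "chain3_hom n 1 2 = seg_mor n t 2 z"
    by (simp add: seg_mor_at2[OF n])
  with z show False
    by (auto simp: seg_mor_def chain3_hom_def)
qed

lemma strong_duality_evalA_surj:
  "strong_duality TYPE('i) n G R \<Longrightarrow> subalg n (S::'i set) A \<Longrightarrow>
    Efun n G R A (Dfun n S A) \<subseteq> evalA n S A ` A"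
  unfolding strong_duality_def alg_iso_def bij_betw_def by blast

lemma strong_duality_evalX_surj:
  "strong_duality TYPE('i) n G R \<Longrightarrow> in_X n G (S::'i set) X \<Longrightarrow>
    Dfun n X (Efun n G R S X) \<subseteq> evalX n G R S X ` X"
  unfolding strong_duality_def str_iso_def bij_betw_def by blast

lemma strong_duality_extend:
  "strong_duality TYPE('i) n G R \<Longrightarrow> in_X n G (S::'i set) X \<Longrightarrow> in_X n G (T::'i set) Y \<Longrightarrow>
    str_emb n G R S X T Y \<phi> \<Longrightarrow> \<forall>\<alpha>\<in>Efun n G R S X. \<exists>\<beta>\<in>Efun n G R T Y. \<forall>x\<in>X. \<beta> (\<phi> x) = \<alpha> x"
  unfolding strong_duality_def by blast

theorem corollary6p2:
  fixes n :: nat and G :: "(nat \<times> (nat list \<Rightarrow> nat)) set" and R :: "(nat \<times> nat list set) set"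
  assumes "4 \<le> n" and "infinite (UNIV :: 'i set)" and "alter_ego n G R"
  shows "\<not> strong_duality TYPE('i) n G R"
proof
  assume sd: "strong_duality TYPE('i) n G R"
  \<comment> \<open>Only one index is needed, so the infinitude of \<open>'i\<close> plays no role.\<close>
  fix t :: 'i
  have n: "4 \<le> n" and alter_ego: "alter_ego n G R"
    using assms by simp_all
  have Z: "in_X n G {t} (seg t 2 n)"
    using n by (intro in_X_seg2[OF alter_ego]) simp
  have Y: "in_X n G {t} (seg t 1 n)"
    using n by (intro in_X_seg1[OF alter_ego]) simp
  have "str_emb n G R {t} (seg t 2 n) {t} (seg t 1 n) id"
    using Z Y by (intro str_emb_inclusion) auto
  with strong_duality_extend[OF sd Z Y]
  have "\<forall>\<alpha>\<in>Efun n G R {t} (seg t 2 n). \<exists>\<beta>\<in>Efun n G R {t} (seg t 1 n). \<forall>x\<in>seg t 2 n. \<beta> x = \<alpha> x"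
    unfolding id_apply .
  then have EZ: "Efun n G R {t} (seg t 2 n) = seg_mor n t ` chain3 n"
    by (intro Efun_seg2_eq[OF alter_ego n] strong_duality_evalA_surj[OF sd subalg_chain3[OF n]])
  have "(\<lambda>e\<in>seg_mor n t ` chain3 n. chain3_hom n 1 (e (pt t 2))) \<in> evalX n G R {t} (seg t 2 n) ` seg t 2 n"
    using strong_duality_evalX_surj[OF sd Z] chain3_hom_1_in_Dfun[OF n, of t]
    unfolding EZ by (rule subsetD)
  also have "evalX n G R {t} (seg t 2 n) = (\<lambda>z. \<lambda>e\<in>seg_mor n t ` chain3 n. e z)"
    unfolding EZ[symmetric] by (rule ext) (simp only: evalX_def)
  finally show False
    using chain3_hom_1_not_evaluation[OF n] by contradiction
qed

end
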